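(* Let $\mathbf{G}=(\mathcal{V},\mathcal{E})$ be a strongly connected directed graph on $\mathcal{V}=\{1,\dots,m\}$ with diameter $\delta(\mathbf{G})$. Suppose each node $i$ holds a real input $x_i$ and its identifier $i$, and the Top-$k$ consensus algorithm (described in the context) is run with $T$ rounds, where $T\geq \delta(\mathbf{G})$. Then at termination, for every pair of nodes $i,j\in\mathcal{V}$, $L_i=L_j=(x_{(1)},\dots,x_{(k)})$ and $\ell_i=\ell_j=(I_{(1)},\dots,I_{(k)})$.
   Context: Communication takes place over the directed graph $\mathbf{G}$ in synchronous, reliable rounds; $\mathcal{N}_i^{in}$ is the set of nodes $j$ with $(j,i)\in\mathcal{E}$ and $\mathcal{N}_i^{out}$ the set of nodes $j$ with $(i,j)\in\mathcal{E}$. The diameter $\delta(\mathbf{G})$ is the maximum over ordered pairs of nodes of the length of a shortest directed path between them. Order the input–identifier pairs as $x_{(1)}\ge x_{(2)}\ge\dots\ge x_{(m)}$ with corresponding identifiers $I_{(1)},\dots,I_{(m)}$, where ties are broken in favor of the larger identifier (if $x_{(j)}=x_{(j+1)}$ then $I_{(j)}>I_{(j+1)}$); $k\le m$ is a positive integer. Top-$k$ consensus algorithm: each node $i$ keeps two length-$k$ lists $L_i$ (values) and $\ell_i$ (identifiers), initialized to $L_i=(x_i,\perp,\dots,\perp)$, $\ell_i=(i,\perp,\dots,\perp)$, where $\perp$ denotes an empty entry. In each round $t=1,\dots,T$, every node $i$ sends $(L_i,\ell_i)$ to all out-neighbors, receives $(L_j,\ell_j)$ from all in-neighbors $j\in\mathcal{N}_i^{in}$,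 and replaces $(L_i,\ell_i)$ by the (up to) $k$ largest value–identifier pairs among those in its own lists and the received lists (duplicates of the same pair counted once), sorted in decreasing order of value with ties going to the larger identifier. *)

theory Defs
  imports Complex_Main "HOL-Library.Product_Lexorder"
begin

(* Value-identifier pairs (value, identifier) :: real \<times> nat.
   The lexicographic order of Product_Lexorder is exactly the paper's order:
   (v,i) > (w,j) iff v > w, or v = w and i > j. *)

definition topk :: "nat \<Rightarrow> (real \<times> nat) set \<Rightarrow> (real \<times> nat) list" where
  "topk k S = take k (rev (sorted_list_of_set S))"

(* the non-empty entries of node i's lists after t rounds *)
primrec topk_state :: "nat \<Rightarrow> (nat \<times> nat) set \<Rightarrow> (nat \<Rightarrow> real) \<Rightarrow> nat \<Rightarrow> nat \<Rightarrow> (real \<times> nat) list" where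
  "topk_state k E x 0 i = [(x i, i)]"
| "topk_state k E x (Suc t) i =
     topk k (set (topk_state k E x t i) \<union> (\<Union>j\<in>{j. (j, i) \<in> E}. set (topk_state k E x t j)))"

(* the length-k lists L_i (values) and \<ell>_i (identifiers), None = \<bottom> *)
definition L_list :: "nat \<Rightarrow> (nat \<times> nat) set \<Rightarrow> (nat \<Rightarrow> real) \<Rightarrow> nat \<Rightarrow> nat \<Rightarrow> real option list" where
  "L_list k E x t i = (let S = topk_state k E x t i in
      map (\<lambda>p. Some (fst p)) S @ replicate (k - length S) None)"

definition ell_list :: "nat \<Rightarrow> (nat \<times> nat) set \<Rightarrow> (nat \<Rightarrow> real) \<Rightarrow> nat \<Rightarrow> nat \<Rightarrow> nat option list" where
  "ell_list k E x t i = (let S = topk_state k E x t i in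
      map (\<lambda>p. Some (snd p)) S @ replicate (k - length S) None)"

(* all input-identifier pairs ordered decreasingly: the j-th entry (0-based) is (x_(j+1), I_(j+1)) *)
definition ranked :: "nat set \<Rightarrow> (nat \<Rightarrow> real) \<Rightarrow> (real \<times> nat) list" where
  "ranked V x = rev (sorted_list_of_set ((\<lambda>i. (x i, i)) ` V))"

definition graph_dist :: "(nat \<times> nat) set \<Rightarrow> nat \<Rightarrow> nat \<Rightarrow> nat" where
  "graph_dist E i j = (LEAST n. (i, j) \<in> E ^^ n)"

definition diameter :: "nat set \<Rightarrow> (nat \<times> nat) set \<Rightarrow> nat" where
  "diameter V E = Max {graph_dist E i j | i j. i \<in> V \<and> j \<in> V}"

definition strongly_connected :: "nat set \<Rightarrow> (nat \<times> nat) set \<Rightarrow> bool" where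
  "strongly_connected V E \<longleftrightarrow> (\<forall>i\<in>V. \<forall>j\<in>V. (i, j) \<in> (E \<inter> V \<times> V)\<^sup>*)"

end

theory Submission
  imports Defs
begin

text \<open>
  After \<open>t\<close> rounds node \<open>i\<close> holds exactly the \<open>k\<close> largest pairs of the nodes from which
  \<open>i\<close> can be reached in at most \<open>t\<close> steps: merging the top \<open>k\<close> of several sets gives the
  top \<open>k\<close> of their union, since an element among the \<open>k\<close> largest of the union is among
  the \<open>k\<close> largest of every part containing it. Once \<open>t\<close> is at least the diameter, every
  node is reached from all nodes, so every node holds the global top \<open>k\<close>.
\<close>

definition top_set :: "nat \<Rightarrow> 'a::linorder set \<Rightarrow> 'a set" where
  "top_set k S = {a \<in> S. card {b \<in> S. a < b} < k}"

lemma top_set_subset: "top_set k S \<subseteq> S"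
  by (auto simp: top_set_def)

lemma greater_nth_eq_set_take:
  fixes ys :: "'a::linorder list"
  assumes "sorted_wrt (>) ys" and "p < length ys"
  shows "{b \<in> set ys. ys ! p < b} = set (take p ys)"
proof (intro set_eqI iffI)
  fix b assume "b \<in> {b \<in> set ys. ys ! p < b}"
  then obtain q where q: "q < length ys" "b = ys ! q" "ys ! p < ys ! q"
    by (auto simp: in_set_conv_nth)
  have "q < p"
  proof (rule ccontr)
    assume "\<not> q < p"
    then have "p < q \<or> p = q" by auto
    then show False
      using sorted_wrt_nth_less[OF assms(1), of p q] q by auto
  qed
  then show "b \<in> set (take p ys)"
    using q by (auto simp: in_set_conv_nth)
next
  fix b assume "b \<in> set (take p ys)"
  then obtain q where "q < p" "b = ys ! q"
    using assms(2) by (auto simp: in_set_conv_nth)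
  then show "b \<in> {b \<in> set ys. ys ! p < b}"
    using sorted_wrt_nth_less[OF assms(1), of q p] assms(2) by auto
qed

lemma sorted_wrt_greater_rev_sorted_list_of_set: "sorted_wrt (>) (rev (sorted_list_of_set S))"
  by (simp add: sorted_wrt_rev strict_sorted_list_of_set)

lemma set_take_rev_sorted_list_of_set:
  assumes "finite S"
  shows "set (take k (rev (sorted_list_of_set S))) = top_set k S"
proof -
  define ys where "ys = rev (sorted_list_of_set S)"
  have sorted: "sorted_wrt (>) ys" and distinct: "distinct ys" and set_ys: "set ys = S"
    using assms sorted_wrt_greater_rev_sorted_list_of_set by (simp_all add: ys_def)
  have rank: "card {b \<in> S. ys ! p < b} = p" if "p < length ys" for p
    using greater_nth_eq_set_take[OF sorted that] set_ys distinct that by (simp add: distinct_card)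
  show ?thesis
    unfolding ys_def[symmetric] top_set_def
  proof (intro set_eqI iffI)
    fix a assume "a \<in> set (take k ys)"
    then obtain p where "p < k" "p < length ys" "a = ys ! p"
      by (auto simp: in_set_conv_nth)
    then show "a \<in> {a \<in> S. card {b \<in> S. a < b} < k}"
      using rank set_ys by auto
  next
    fix a assume a: "a \<in> {a \<in> S. card {b \<in> S. a < b} < k}"
    then obtain p where "p < length ys" "a = ys ! p"
      using set_ys by (auto simp: in_set_conv_nth)
    moreover from this have "p < k"
      using rank a by auto
    ultimately show "a \<in> set (take k ys)"
      by (auto simp: in_set_conv_nth)
  qed
qed

lemma take_rev_sorted_list_of_set:
  assumes "finite S"
  shows "take k (rev (sorted_list_of_set S)) = rev (sorted_list_of_set (top_set k S))"
proof -
  have "sorted_wrt (<) (rev (take k (rev (sorted_list_of_set S))))"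
    using sorted_wrt_take[OF sorted_wrt_greater_rev_sorted_list_of_set] by (simp add: sorted_wrt_rev)
  moreover have "finite (top_set k S)"
    using assms top_set_subset finite_subset by blast
  ultimately have "rev (take k (rev (sorted_list_of_set S))) = sorted_list_of_set (top_set k S)"
    using set_take_rev_sorted_list_of_set[OF assms]
    by (intro strict_sorted_equal) (simp_all add: strict_sorted_list_of_set)
  then show ?thesis
    by (metis rev_rev_ident)
qed

lemma card_top_set:
  assumes "finite S"
  shows "card (top_set k S) = min k (card S)"
  using assms by (simp flip: set_take_rev_sorted_list_of_set add: distinct_card)

lemma top_set_antimono:
  assumes "finite A" and "B \<subseteq> A"
  shows "top_set k A \<inter> B \<subseteq> top_set k B"
proof
  fix a assume a: "a \<in> top_set k A \<inter> B"
  have "card {b \<in> B. a < b} \<le> card {b \<in> A. a < b}"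
    using assms by (intro card_mono) auto
  then show "a \<in> top_set k B"
    using a by (auto simp: top_set_def)
qed

lemma top_set_eq_if_between:
  assumes "finite A" and "top_set k A \<subseteq> C" and "C \<subseteq> A"
  shows "top_set k C = top_set k A"
proof (rule sym, rule card_subset_eq)
  have "finite C"
    using assms(1,3) finite_subset by blast
  then show "finite (top_set k C)"
    using top_set_subset finite_subset by blast
  show "top_set k A \<subseteq> top_set k C"
    using top_set_antimono[OF assms(1,3)] assms(2) by blast
  have "min k (card A) \<le> card C"
    using card_mono[OF \<open>finite C\<close> assms(2)] card_top_set[OF assms(1)] by simp
  moreover have "card C \<le> card A"
    using card_mono[OF assms(1,3)] .
  ultimately show "card (top_set k A) = card (top_set k C)"
    by (simp add: card_top_set assms(1) \<open>finite C\<close>)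
qed

lemma top_set_UN_top_set:
  assumes "finite I" and "\<And>i. i \<in> I \<Longrightarrow> finite (A i)"
  shows "top_set k (\<Union>i\<in>I. top_set k (A i)) = top_set k (\<Union>i\<in>I. A i)"
proof (rule top_set_eq_if_between)
  show "finite (\<Union>i\<in>I. A i)"
    using assms by blast
  show "(\<Union>i\<in>I. top_set k (A i)) \<subseteq> (\<Union>i\<in>I. A i)"
    using top_set_subset by blast
  show "top_set k (\<Union>i\<in>I. A i) \<subseteq> (\<Union>i\<in>I. top_set k (A i))"
  proof
    fix a assume a: "a \<in> top_set k (\<Union>i\<in>I. A i)"
    then obtain i where "i \<in> I" "a \<in> A i"
      using top_set_subset by blast
    then have "a \<in> top_set k (A i)"
      using a top_set_antimono[OF \<open>finite (\<Union>i\<in>I. A i)\<close>, of "A i" k] by blast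
    then show "a \<in> (\<Union>i\<in>I. top_set k (A i))"
      using \<open>i \<in> I\<close> by blast
  qed
qed

lemma topk_eq_top_set:
  "finite S \<Longrightarrow> topk k S = rev (sorted_list_of_set (top_set k S))"
  unfolding topk_def by (rule take_rev_sorted_list_of_set)

lemma set_topk: "finite S \<Longrightarrow> set (topk k S) = top_set k S"
  unfolding topk_def by (rule set_take_rev_sorted_list_of_set)

primrec reach :: "(nat \<times> nat) set \<Rightarrow> nat \<Rightarrow> nat \<Rightarrow> nat set" where
  "reach E 0 i = {i}"
| "reach E (Suc t) i = (\<Union>j\<in>insert i {j. (j, i) \<in> E}. reach E t j)"

lemma finite_in_neighbours: "finite E \<Longrightarrow> finite {j. (j, i) \<in> E}"
  by (rule finite_subset[of _ "fst ` E"]) force+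

lemma finite_reach: "finite E \<Longrightarrow> finite (reach E t i)"
  by (induction t arbitrary: i) (simp_all add: finite_in_neighbours)

lemma reach_subset: "E \<subseteq> V \<times> V \<Longrightarrow> i \<in> V \<Longrightarrow> reach E t i \<subseteq> V"
  by (induction t arbitrary: i) auto

lemma mem_reach_if_relpow: "(j, i) \<in> E ^^ n \<Longrightarrow> n \<le> t \<Longrightarrow> j \<in> reach E t i"
proof (induction n arbitrary: i t)
  case 0
  then show ?case
    by (induction t) auto
next
  case (Suc n)
  then obtain w t' where "(j, w) \<in> E ^^ n" "(w, i) \<in> E" "t = Suc t'" "n \<le> t'"
    by (cases t) auto
  then show ?case
    using Suc.IH by auto
qed

lemma topk_state_eq_topk_reach:
  assumes "finite E" and "1 \<le> k"
  shows "topk_state k E x t i = topk k ((\<lambda>j. (x j, j)) ` reach E t i)"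
proof (induction t arbitrary: i)
  case 0
  show ?case
    using assms(2) by (simp add: topk_def)
next
  case (Suc t)
  let ?P = "\<lambda>j. (x j, j)" and ?J = "insert i {j. (j, i) \<in> E}"
  have "finite ?J"
    using finite_in_neighbours[OF assms(1)] by simp
  have finite_parts: "finite (?P ` reach E t j)" for j
    using finite_reach[OF assms(1)] by simp
  have "finite (top_set k (?P ` reach E t j))" for j
    using finite_subset[OF top_set_subset finite_parts] .
  then have finite_merged: "finite (\<Union>j\<in>?J. top_set k (?P ` reach E t j))"
    using \<open>finite ?J\<close> by blast
  have "topk_state k E x (Suc t) i = topk k (\<Union>j\<in>?J. top_set k (?P ` reach E t j))"
    using Suc.IH by (simp add: set_topk finite_reach[OF assms(1)])
  also have "\<dots> = rev (sorted_list_of_set (top_set k (\<Union>j\<in>?J. ?P ` reach E t j)))"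
    unfolding topk_eq_top_set[OF finite_merged] top_set_UN_top_set[OF \<open>finite ?J\<close> finite_parts] ..
  also have "\<dots> = topk k (\<Union>j\<in>?J. ?P ` reach E t j)"
    using \<open>finite ?J\<close> finite_parts by (intro topk_eq_top_set[symmetric]) blast
  also have "\<dots> = topk k (?P ` reach E (Suc t) i)"
    by (simp only: reach.simps image_UN)
  finally show ?case .
qed

lemma relpow_graph_dist: "(i, j) \<in> E\<^sup>* \<Longrightarrow> (i, j) \<in> E ^^ graph_dist E i j"
  unfolding graph_dist_def rtrancl_power by (rule LeastI_ex)

lemma graph_dist_le_diameter:
  assumes "finite V" and "i \<in> V" and "j \<in> V"
  shows "graph_dist E i j \<le> diameter V E"
proof -
  have "{graph_dist E i j | i j. i \<in> V \<and> j \<in> V} = (\<lambda>(i, j). graph_dist E i j) ` (V \<times> V)"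
    by auto
  then show ?thesis
    unfolding diameter_def using assms by (intro Max_ge) auto
qed

lemma reach_eq_if_diameter_le:
  assumes "finite V" and "E \<subseteq> V \<times> V" and "strongly_connected V E"
    and "diameter V E \<le> t" and "i \<in> V"
  shows "reach E t i = V"
proof
  show "reach E t i \<subseteq> V"
    using reach_subset[OF assms(2,5)] .
  show "V \<subseteq> reach E t i"
  proof
    fix j assume "j \<in> V"
    then have "(j, i) \<in> E\<^sup>*"
      using assms(3,5) rtrancl_mono[of "E \<inter> V \<times> V" E] unfolding strongly_connected_def by blast
    moreover have "graph_dist E j i \<le> t"
      using order.trans[OF graph_dist_le_diameter[OF assms(1) \<open>j \<in> V\<close> assms(5)] assms(4)] .
    ultimately show "j \<in> reach E t i"
      using mem_reach_if_relpow relpow_graph_dist by blast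
  qed
qed

theorem theorem1:
  fixes m k T :: nat and E :: "(nat \<times> nat) set" and x :: "nat \<Rightarrow> real"
  assumes "m \<ge> 1"
    and "E \<subseteq> {1..m} \<times> {1..m}"
    and "strongly_connected {1..m} E"
    and "1 \<le> k" and "k \<le> m"
    and "T \<ge> diameter {1..m} E"
  shows "\<forall>i\<in>{1..m}. \<forall>j\<in>{1..m}.
           L_list k E x T i = L_list k E x T j \<and>
           ell_list k E x T i = ell_list k E x T j \<and>
           L_list k E x T i = map (\<lambda>p. Some (fst p)) (take k (ranked {1..m} x)) \<and>
           ell_list k E x T i = map (\<lambda>p. Some (snd p)) (take k (ranked {1..m} x))"
proof -
  have "finite E"
    using assms(2) finite_subset by blast
  then have state: "topk_state k E x T i = take k (ranked {1..m} x)" if "i \<in> {1..m}" for i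
    using topk_state_eq_topk_reach[OF _ assms(4)] reach_eq_if_diameter_le[OF _ assms(2,3,6) that]
    by (simp add: topk_def ranked_def)
  have "inj_on (\<lambda>j. (x j, j)) {1..m}"
    by (rule inj_onI) simp
  then have "length (take k (ranked {1..m} x)) = k"
    using assms(5) by (simp add: ranked_def card_image)
  then show ?thesis
    unfolding L_list_def ell_list_def Let_def using state by simp
qed

end
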